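(* Let $\Sigma=(X,U,F)$ be a system, $Q\subset X$ a controlled invariant set, and $V\subset U$ a finite cover of $Q$. Assume in addition: (C.1) $Q_a\cap Q_b=\emptyset$ for all distinct $a,b\in V$; (C.2) for all $a,b\in V$ with $M_{ab}=1$ there exists $K\subset Q_a$ such that $Q_b\subset F(K,a)$; (C.3) $Q_c=\emptyset$ for every $c\in U\setminus V$. Then $h_{inv}(Q)=\log\rho(M_{Q,V})$, where $\rho$ denotes the spectral radius and $M_{Q,V}=(M_{ab})$.
   Context: A system is a triple $\Sigma=(X,U,F)$ where $X,U$ are nonempty sets and $F:X\times U\rightrightarrows X$ is a set-valued map with $F(x,u)\neq\emptyset$ for all $(x,u)$; for $A\subset X$, $F(A,u)=\bigcup_{x\in A}F(x,u)$. $Q\subset X$ is controlled invariant if for every $x\in Q$ there is $u\in U$ with $F(x,u)\subset Q$. For $u\in U$ put $Q_u=\{x\in Q:F(x,u)\subset Q\}$. Elements of $U^n$ are written $\omega=\omega_0\cdots\omega_{n-1}$, $\omega_{[0,i]}=\omega_0\cdots\omega_i$. A set $S\subset U^n$ is an admissible family of length $n$ for $Q$ if (a) $\omega'_0=\omega''_0$ for all $\omega',\omega''\in S$, and (b) there exists $x\in Q$ such that for every $\omega\in S$, with $I^0_\omega(x)=\{x\}$: for all $i=0,\dots,n-2$, $F(I^i_\omega(x),\omega_i)\subset\bigcup_{\omega'\in S,\ \omega'_{[0,i]}=\omega_{[0,i]}}Q_{\omega'_{i+1}}$ and $I^{i+1}_\omega(x):=F(I^i_\omega(x),\omega_i)\cap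 Q_{\omega_{i+1}}\neq\emptyset$; and $I^n_\omega(x):=F(I^{n-1}_\omega(x),\omega_{n-1})\subset Q$. Let $AF^n(Q)$ be the set of such families and $Q_S$ the set of $x\in Q$ satisfying (b). A set $\mathscr{S}\subset U^n$ is $(n,Q)$-spanning if $Q\subset\bigcup_{S\subset\mathscr{S},\,S\in AF^n(Q)}Q_S$; $r_{inv}(n,Q)$ is the infimum of $\sharp\mathscr{S}$ over such sets, and $h_{inv}(Q)=\limsup_{n\to\infty}\frac1n\log r_{inv}(n,Q)$ ($\log$ base $2$). A set $V\subset U$ is a cover of $Q$ if $Q\subset\bigcup_{a\in V}Q_a$. The admissible matrix $M_{Q,V}=(M_{ab})_{a,b\in V}$ has $M_{ab}=1$ if there exists $x\in Q_a$ with $F(x,a)\cap Q_b\neq\emptyset$, and $M_{ab}=0$ otherwise. *)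

theory Defs
  imports "Jordan_Normal_Form.Spectral_Radius" "HOL-Library.Extended_Real" "HOL-Library.Liminf_Limsup"
begin

definition is_system :: "'x set \<Rightarrow> 'u set \<Rightarrow> ('x \<Rightarrow> 'u \<Rightarrow> 'x set) \<Rightarrow> bool" where
  "is_system X U F \<longleftrightarrow> X \<noteq> {} \<and> U \<noteq> {} \<and>
     (\<forall>x\<in>X. \<forall>u\<in>U. F x u \<noteq> {} \<and> F x u \<subseteq> X)"

definition Img :: "('x \<Rightarrow> 'u \<Rightarrow> 'x set) \<Rightarrow> 'x set \<Rightarrow> 'u \<Rightarrow> 'x set" where
  "Img F A u = (\<Union>x\<in>A. F x u)"

definition controlled_invariant :: "'x set \<Rightarrow> 'u set \<Rightarrow> ('x \<Rightarrow> 'u \<Rightarrow> 'x set) \<Rightarrow> 'x set \<Rightarrow> bool" where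
  "controlled_invariant X U F Q \<longleftrightarrow> Q \<subseteq> X \<and> (\<forall>x\<in>Q. \<exists>u\<in>U. F x u \<subseteq> Q)"

definition Qsub :: "('x \<Rightarrow> 'u \<Rightarrow> 'x set) \<Rightarrow> 'x set \<Rightarrow> 'u \<Rightarrow> 'x set" where
  "Qsub F Q u = {x \<in> Q. F x u \<subseteq> Q}"

definition words :: "'u set \<Rightarrow> nat \<Rightarrow> 'u list set" where
  "words U n = {w. length w = n \<and> set w \<subseteq> U}"

fun Iset :: "('x \<Rightarrow> 'u \<Rightarrow> 'x set) \<Rightarrow> 'x set \<Rightarrow> 'u list \<Rightarrow> 'x \<Rightarrow> nat \<Rightarrow> 'x set" where
  "Iset F Q w x 0 = {x}"
| "Iset F Q w x (Suc i) =
     (if Suc i < length w then Img F (Iset F Q w x i) (w ! i) \<inter> Qsub F Q (w ! Suc i)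
      else Img F (Iset F Q w x i) (w ! i))"

definition adm_point :: "('x \<Rightarrow> 'u \<Rightarrow> 'x set) \<Rightarrow> 'x set \<Rightarrow> nat \<Rightarrow> 'u list set \<Rightarrow> 'x \<Rightarrow> bool" where
  "adm_point F Q n S x \<longleftrightarrow> x \<in> Q \<and>
     (\<forall>w\<in>S.
        (\<forall>i. i + 2 \<le> n \<longrightarrow>
           Img F (Iset F Q w x i) (w ! i)
             \<subseteq> (\<Union>w'\<in>{w' \<in> S. take (Suc i) w' = take (Suc i) w}. Qsub F Q (w' ! Suc i))
           \<and> Iset F Q w x (Suc i) \<noteq> {})
        \<and> Iset F Q w x n \<subseteq> Q)"

definition admissible_family :: "'u set \<Rightarrow> ('x \<Rightarrow> 'u \<Rightarrow> 'x set) \<Rightarrow> 'x set \<Rightarrow> nat \<Rightarrow> 'u list set \<Rightarrow> bool" where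
  "admissible_family U F Q n S \<longleftrightarrow> S \<noteq> {} \<and> S \<subseteq> words U n \<and>
     (\<forall>w'\<in>S. \<forall>w''\<in>S. w' ! 0 = w'' ! 0) \<and> (\<exists>x. adm_point F Q n S x)"

definition QS :: "('x \<Rightarrow> 'u \<Rightarrow> 'x set) \<Rightarrow> 'x set \<Rightarrow> nat \<Rightarrow> 'u list set \<Rightarrow> 'x set" where
  "QS F Q n S = {x. adm_point F Q n S x}"

definition spanning :: "'u set \<Rightarrow> ('x \<Rightarrow> 'u \<Rightarrow> 'x set) \<Rightarrow> 'x set \<Rightarrow> nat \<Rightarrow> 'u list set \<Rightarrow> bool" where
  "spanning U F Q n L \<longleftrightarrow> L \<subseteq> words U n \<and>
     Q \<subseteq> (\<Union>S\<in>{S. S \<subseteq> L \<and> admissible_family U F Q n S}. QS F Q n S)"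

definition r_inv :: "'u set \<Rightarrow> ('x \<Rightarrow> 'u \<Rightarrow> 'x set) \<Rightarrow> 'x set \<Rightarrow> nat \<Rightarrow> enat" where
  "r_inv U F Q n = Inf ((\<lambda>L. if finite L then enat (card L) else \<infinity>) ` {L. spanning U F Q n L})"

definition elog2 :: "real \<Rightarrow> ereal" where
  "elog2 r = (if r \<le> 0 then -\<infinity> else ereal (log 2 r))"

definition elog2_enat :: "enat \<Rightarrow> ereal" where
  "elog2_enat k = (case k of enat m \<Rightarrow> elog2 (real m) | \<infinity> \<Rightarrow> \<infinity>)"

definition h_inv :: "'u set \<Rightarrow> ('x \<Rightarrow> 'u \<Rightarrow> 'x set) \<Rightarrow> 'x set \<Rightarrow> ereal" where
  "h_inv U F Q = limsup (\<lambda>n. elog2_enat (r_inv U F Q n) / ereal (real n))"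

definition cover :: "('x \<Rightarrow> 'u \<Rightarrow> 'x set) \<Rightarrow> 'x set \<Rightarrow> 'u set \<Rightarrow> bool" where
  "cover F Q V \<longleftrightarrow> Q \<subseteq> (\<Union>a\<in>V. Qsub F Q a)"

definition adm_entry :: "('x \<Rightarrow> 'u \<Rightarrow> 'x set) \<Rightarrow> 'x set \<Rightarrow> 'u \<Rightarrow> 'u \<Rightarrow> nat" where
  "adm_entry F Q a b = (if \<exists>x\<in>Qsub F Q a. F x a \<inter> Qsub F Q b \<noteq> {} then 1 else 0)"

text \<open>The admissible matrix as a complex (card V x card V) matrix, rows/columns indexed
  through an (arbitrary) enumeration of V; the spectral radius does not depend on it.\<close>
definition adm_matrix :: "('x \<Rightarrow> 'u \<Rightarrow> 'x set) \<Rightarrow> 'x set \<Rightarrow> 'u set \<Rightarrow> complex mat" where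
  "adm_matrix F Q V =
     (let e = (SOME e. bij_betw e {0..<card V} V)
      in mat (card V) (card V) (\<lambda>(i, j). of_nat (adm_entry F Q (e i) (e j))))"

end

(*
  Under (C.1) and (C.3) every point of Q lies in Q_a for exactly one control a, so the state
  determines the only control that keeps the system in Q.  Hence, for n >= 2, r_inv(n,Q) is
  the number of walks of length n in the graph of the admissible matrix M = M_{Q,V}:
  - every walk is the control word of some trajectory, built backwards from its last letter
    with (C.2); an admissible family at the starting point of that trajectory has to follow it
    letter by letter, so every (n,Q)-spanning set contains all walks;
  - conversely, for x in Q the words of length n read along trajectories from x form an
    admissible family at x (partial trajectories are prolonged since V covers Q), so the set
    of walks is itself (n,Q)-spanning.
  The number of walks of length k+1 is the sum of the entries of M^k.  This sum is at least
  rho(M)^k, by an eigenvector of an eigenvalue of maximal modulus, and it is O(t^k) for every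
  t > rho(M), by the Jordan normal form bound for the powers of M/t.
*)

theory Submission
  imports Defs
begin

section \<open>Walks and adjacency matrices\<close>

definition walks :: "'a set \<Rightarrow> ('a \<Rightarrow> 'a \<Rightarrow> bool) \<Rightarrow> nat \<Rightarrow> 'a list set" where
  "walks V R n = {w. length w = n \<and> set w \<subseteq> V \<and> successively R w}"

definition adjacency_mat :: "nat \<Rightarrow> (nat \<Rightarrow> 'a) \<Rightarrow> ('a \<Rightarrow> 'a \<Rightarrow> bool) \<Rightarrow> 'b :: semiring_1 mat" where
  "adjacency_mat N e R = mat N N (\<lambda>(i, j). of_bool (R (e i) (e j)))"

lemma dim_adjacency_mat [simp]:
  "dim_row (adjacency_mat N e R) = N" "dim_col (adjacency_mat N e R) = N"
  by (simp_all add: adjacency_mat_def)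

lemma finite_walks: "finite V \<Longrightarrow> finite (walks V R n)"
  by (rule finite_subset[OF _ finite_lists_length_eq[of V n]]) (auto simp: walks_def)

lemma walks_Suc_0: "walks V R (Suc 0) = (\<lambda>a. [a]) ` V"
  by (auto simp: walks_def length_Suc_conv)

lemma walks_Suc_Suc_ending:
  assumes "c \<in> V"
  shows "{w \<in> walks V R (Suc (Suc k)). hd w = a \<and> last w = c} =
    (\<lambda>w. w @ [c]) ` (\<Union>b\<in>{b \<in> V. R b c}. {w \<in> walks V R (Suc k). hd w = a \<and> last w = b})"
proof (intro equalityI subsetI)
  fix w assume w: "w \<in> {w \<in> walks V R (Suc (Suc k)). hd w = a \<and> last w = c}"
  define v where "v = butlast w"
  have "w \<noteq> []" using w by (auto simp: walks_def)
  then have wv: "w = v @ [c]" using w append_butlast_last_id[of w] by (simp add: v_def)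
  have "v \<noteq> []" using w wv by (auto simp: walks_def)
  moreover have "set v \<subseteq> V" using w wv by (auto simp: walks_def)
  ultimately have "last v \<in> V" using last_in_set by blast
  then show "w \<in> (\<lambda>w. w @ [c]) ` (\<Union>b\<in>{b \<in> V. R b c}. {w \<in> walks V R (Suc k). hd w = a \<and> last w = b})"
    using w wv \<open>v \<noteq> []\<close> by (auto simp: walks_def successively_append_iff intro!: image_eqI[of _ _ v])
next
  fix w assume "w \<in> (\<lambda>w. w @ [c]) ` (\<Union>b\<in>{b \<in> V. R b c}. {w \<in> walks V R (Suc k). hd w = a \<and> last w = b})"
  then obtain v where "w = v @ [c]" "v \<in> walks V R (Suc k)" "hd v = a" "R (last v) c" "last v \<in> V"
    by auto
  moreover from this have "v \<noteq> []" by (auto simp: walks_def)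
  ultimately show "w \<in> {w \<in> walks V R (Suc (Suc k)). hd w = a \<and> last w = c}"
    using assms by (auto simp: walks_def successively_append_iff)
qed

lemma card_walks_Suc_Suc_ending:
  assumes "finite V" "c \<in> V"
  shows "card {w \<in> walks V R (Suc (Suc k)). hd w = a \<and> last w = c} =
    (\<Sum>b\<in>V. card {w \<in> walks V R (Suc k). hd w = a \<and> last w = b} * of_bool (R b c))"
proof -
  have "card {w \<in> walks V R (Suc (Suc k)). hd w = a \<and> last w = c} =
      card (\<Union>b\<in>{b \<in> V. R b c}. {w \<in> walks V R (Suc k). hd w = a \<and> last w = b})"
    unfolding walks_Suc_Suc_ending[OF assms(2)] by (rule card_image) (auto simp: inj_on_def)
  also have "\<dots> = (\<Sum>b\<in>{b \<in> V. R b c}. card {w \<in> walks V R (Suc k). hd w = a \<and> last w = b})"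
    using assms(1) by (intro card_UN_disjoint) (auto simp: finite_walks)
  also have "\<dots> = (\<Sum>b\<in>V. if R b c then card {w \<in> walks V R (Suc k). hd w = a \<and> last w = b} else 0)"
    by (rule sum.inter_filter[OF assms(1)])
  also have "\<dots> = (\<Sum>b\<in>V. card {w \<in> walks V R (Suc k). hd w = a \<and> last w = b} * of_bool (R b c))"
    by (intro sum.cong) auto
  finally show ?thesis .
qed

lemma adjacency_mat_pow_entry:
  assumes e: "bij_betw e {0..<N} V" and "i < N" "j < N"
  shows "(adjacency_mat N e R ^\<^sub>m k :: 'b :: semiring_1 mat) $$ (i, j) =
    of_nat (card {w \<in> walks V R (Suc k). hd w = e i \<and> last w = e j})"
  using \<open>j < N\<close>
proof (induction k arbitrary: j)
  case 0
  have "e i = e j \<longleftrightarrow> i = j"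
    using e \<open>i < N\<close> 0 by (auto simp: bij_betw_def inj_on_def)
  moreover have "e i \<in> V" using e \<open>i < N\<close> by (auto simp: bij_betw_def)
  moreover have "{w \<in> walks V R (Suc 0). hd w = a \<and> last w = b} = (if a = b \<and> a \<in> V then {[a]} else {})"
    for a b by (auto simp: walks_Suc_0)
  ultimately show ?case
    using \<open>i < N\<close> 0 by (simp add: adjacency_mat_def)
next
  case (Suc k j)
  let ?A = "adjacency_mat N e R :: 'b mat"
  let ?c = "\<lambda>b. card {w \<in> walks V R (Suc k). hd w = e i \<and> last w = b}"
  have fin: "finite V" using e bij_betw_finite by blast
  have "(?A ^\<^sub>m Suc k) $$ (i, j) = (\<Sum>l = 0..<N. (?A ^\<^sub>m k) $$ (i, l) * ?A $$ (l, j))"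
    using \<open>i < N\<close> Suc.prems by (simp add: adjacency_mat_def index_mult_mat scalar_prod_def)
  also have "\<dots> = (\<Sum>l = 0..<N. of_nat (?c (e l) * of_bool (R (e l) (e j))))"
    using Suc by (intro sum.cong) (auto simp: adjacency_mat_def)
  also have "\<dots> = of_nat (\<Sum>b\<in>V. ?c b * of_bool (R b (e j)))"
    by (simp add: sum.reindex_bij_betw[OF e, of "\<lambda>b. ?c b * of_bool (R b (e j))", symmetric])
  also have "\<dots> = of_nat (card {w \<in> walks V R (Suc (Suc k)). hd w = e i \<and> last w = e j})"
    using card_walks_Suc_Suc_ending[OF fin] e Suc.prems by (auto simp: bij_betw_def)
  finally show ?case .
qed

lemma card_walks_Suc_eq_sum:
  assumes "finite V"
  shows "card (walks V R (Suc k)) =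
    (\<Sum>a\<in>V. \<Sum>b\<in>V. card {w \<in> walks V R (Suc k). hd w = a \<and> last w = b})"
proof -
  have "hd w \<in> V \<and> last w \<in> V" if "w \<in> walks V R (Suc k)" for w
  proof -
    have "w \<noteq> []" using that by (auto simp: walks_def)
    then show ?thesis using that hd_in_set[of w] last_in_set[of w] by (auto simp: walks_def)
  qed
  then have "(\<lambda>w. (hd w, last w)) ` walks V R (Suc k) \<subseteq> V \<times> V" by auto
  then have "card (walks V R (Suc k)) =
      (\<Sum>p\<in>V \<times> V. card {w \<in> walks V R (Suc k). (hd w, last w) = p})"
    using sum.group[of "walks V R (Suc k)" "V \<times> V" "\<lambda>w. (hd w, last w)" "\<lambda>_. 1 :: nat"] assms
    by (simp add: finite_walks)
  also have "\<dots> = (\<Sum>(a, b)\<in>V \<times> V. card {w \<in> walks V R (Suc k). hd w = a \<and> last w = b})"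
    by (intro sum.cong) auto
  finally show ?thesis by (simp add: sum.cartesian_product)
qed

section \<open>Spectral radius and the growth of matrix powers\<close>

definition entrywise_l1_norm :: "complex mat \<Rightarrow> real" where
  "entrywise_l1_norm A = (\<Sum>i = 0..<dim_row A. \<Sum>j = 0..<dim_col A. cmod (A $$ (i, j)))"

lemma entrywise_l1_norm_adjacency_mat_pow:
  assumes e: "bij_betw e {0..<N} V"
  shows "entrywise_l1_norm (adjacency_mat N e R ^\<^sub>m k) = real (card (walks V R (Suc k)))"
proof -
  let ?c = "\<lambda>a b. card {w \<in> walks V R (Suc k). hd w = a \<and> last w = b}"
  have "entrywise_l1_norm (adjacency_mat N e R ^\<^sub>m k) = (\<Sum>i = 0..<N. \<Sum>j = 0..<N. real (?c (e i) (e j)))"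
    unfolding entrywise_l1_norm_def
    by (intro sum.cong) (simp_all add: adjacency_mat_pow_entry[OF e])
  also have "\<dots> = (\<Sum>i = 0..<N. \<Sum>b\<in>V. real (?c (e i) b))"
    by (intro sum.cong refl sum.reindex_bij_betw[OF e])
  also have "\<dots> = (\<Sum>a\<in>V. \<Sum>b\<in>V. real (?c a b))"
    using sum.reindex_bij_betw[OF e,
        of "\<lambda>a. \<Sum>b\<in>V. real (card {w \<in> walks V R (Suc k). hd w = a \<and> last w = b})"]
    by simp
  also have "\<dots> = real (card (walks V R (Suc k)))"
    using card_walks_Suc_eq_sum[OF bij_betw_finite[THEN iffD1, OF e]] by simp
  finally show ?thesis .
qed

lemma spectral_radius_nonneg:
  assumes "A \<in> carrier_mat n n" "n > 0"
  shows "spectral_radius A \<ge> 0"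
  using spectral_radius_mem_max(1)[OF assms] by auto

lemma eigenvalue_norm_le_entrywise_l1_norm:
  assumes A: "A \<in> carrier_mat n n" and ev: "eigenvalue A \<mu>"
  shows "cmod \<mu> \<le> entrywise_l1_norm A"
proof -
  obtain v where v: "v \<in> carrier_vec n" "v \<noteq> 0\<^sub>v n" "A *\<^sub>v v = \<mu> \<cdot>\<^sub>v v"
    using ev A unfolding eigenvalue_def eigenvector_def by auto
  have "n > 0" by (rule eigenvalue_imp_nonzero_dim[OF A ev])
  define m where "m = Max ((\<lambda>j. cmod (v $ j)) ` {0..<n})"
  have "m \<in> (\<lambda>j. cmod (v $ j)) ` {0..<n}"
    unfolding m_def using \<open>n > 0\<close> by (intro Max_in) auto
  then obtain i where i: "i < n" "m = cmod (v $ i)" by auto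
  have le_m: "cmod (v $ j) \<le> m" if "j < n" for j
    unfolding m_def using that by (intro Max_ge) auto
  have "m > 0"
  proof (rule ccontr)
    assume "\<not> m > 0"
    then have "v $ j = 0" if "j < n" for j
      using le_m[OF that] by (meson norm_le_zero_iff order_trans not_less)
    then have "v = 0\<^sub>v n" using v(1) by (intro eq_vecI) auto
    then show False using v(2) by contradiction
  qed
  have "\<mu> * v $ i = (A *\<^sub>v v) $ i" using v i by simp
  also have "\<dots> = (\<Sum>j = 0..<n. A $$ (i, j) * v $ j)" using v(1) i A by (simp add: scalar_prod_def)
  finally have eq: "\<mu> * v $ i = (\<Sum>j = 0..<n. A $$ (i, j) * v $ j)" .
  have "cmod \<mu> * m = cmod (\<Sum>j = 0..<n. A $$ (i, j) * v $ j)"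
    unfolding i(2) eq[symmetric] by (simp add: norm_mult)
  also have "\<dots> \<le> (\<Sum>j = 0..<n. cmod (A $$ (i, j)) * m)"
    using le_m by (intro order_trans[OF norm_sum] sum_mono) (auto simp: norm_mult mult_left_mono)
  also have "\<dots> \<le> (\<Sum>j = 0..<n. (\<Sum>i' = 0..<n. cmod (A $$ (i', j))) * m)"
  proof (intro sum_mono mult_right_mono)
    show "cmod (A $$ (i, j)) \<le> (\<Sum>i' = 0..<n. cmod (A $$ (i', j)))" for j
      using i(1) by (intro member_le_sum) auto
  qed (use \<open>m > 0\<close> in simp)
  also have "\<dots> = (\<Sum>j = 0..<n. \<Sum>i' = 0..<n. cmod (A $$ (i', j))) * m"
    by (simp add: sum_distrib_right)
  also have "\<dots> = entrywise_l1_norm A * m"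
    using A unfolding entrywise_l1_norm_def by (subst sum.swap) simp
  finally show ?thesis using \<open>m > 0\<close> by simp
qed

lemma spectral_radius_pow_le_entrywise_l1_norm:
  assumes A: "A \<in> carrier_mat n n" and "n > 0"
  shows "spectral_radius A ^ k \<le> entrywise_l1_norm (A ^\<^sub>m k)"
proof -
  obtain \<nu> where "eigenvalue A \<nu>" "spectral_radius A = cmod \<nu>"
    using spectral_radius_mem_max(1)[OF assms] unfolding spectrum_def by auto
  moreover from this obtain v where "eigenvector A v \<nu>" unfolding eigenvalue_def by auto
  then have "eigenvalue (A ^\<^sub>m k) (\<nu> ^ k)"
    using eigenvector_pow[OF A] A unfolding eigenvalue_def eigenvector_def by auto
  then have "cmod (\<nu> ^ k) \<le> entrywise_l1_norm (A ^\<^sub>m k)"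
    using A by (intro eigenvalue_norm_le_entrywise_l1_norm[of _ n]) simp_all
  ultimately show ?thesis by (simp add: norm_power)
qed

lemma smult_pow_mat:
  assumes "A \<in> carrier_mat n n"
  shows "(c \<cdot>\<^sub>m A) ^\<^sub>m k = (c ^ k :: 'a :: comm_semiring_1) \<cdot>\<^sub>m (A ^\<^sub>m k)"
proof (induction k)
  case 0
  show ?case using assms by (intro eq_matI) auto
next
  case (Suc k)
  have "(c \<cdot>\<^sub>m A) ^\<^sub>m Suc k = c \<cdot>\<^sub>m (c ^ k \<cdot>\<^sub>m (A ^\<^sub>m k * A))"
    using Suc assms by (simp add: mult_smult_assoc_mat[of _ n n] mult_smult_distrib[of _ n n])
  also have "\<dots> = c ^ Suc k \<cdot>\<^sub>m (A ^\<^sub>m Suc k)"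
    by (intro eq_matI) (simp_all add: mult.assoc)
  finally show ?case .
qed

lemma eigenvalue_smult_mat:
  assumes "A \<in> carrier_mat n n" "eigenvalue A \<mu>"
  shows "eigenvalue (c \<cdot>\<^sub>m A) (c * \<mu>)"
proof -
  obtain v where v: "v \<in> carrier_vec n" "v \<noteq> 0\<^sub>v n" "A *\<^sub>v v = \<mu> \<cdot>\<^sub>v v"
    using assms unfolding eigenvalue_def eigenvector_def by auto
  have "(c \<cdot>\<^sub>m A) *\<^sub>v v = (c * \<mu>) \<cdot>\<^sub>v v"
  proof (rule eq_vecI)
    fix i assume "i < dim_vec ((c * \<mu>) \<cdot>\<^sub>v v)"
    then have "i < n" using v by simp
    then have "((c \<cdot>\<^sub>m A) *\<^sub>v v) $ i = c * ((A *\<^sub>v v) $ i)"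
      using v(1) assms(1) by simp
    also have "\<dots> = ((c * \<mu>) \<cdot>\<^sub>v v) $ i"
      unfolding v(3) using v(1) \<open>i < n\<close> by simp
    finally show "((c \<cdot>\<^sub>m A) *\<^sub>v v) $ i = ((c * \<mu>) \<cdot>\<^sub>v v) $ i" .
  qed (use v assms(1) in simp)
  then show ?thesis
    unfolding eigenvalue_def eigenvector_def using v assms(1) by (intro exI[of _ v]) simp
qed

lemma spectral_radius_smult_ge:
  assumes A: "A \<in> carrier_mat n n" and "n > 0" "c \<ge> 0"
  shows "c * spectral_radius A \<le> spectral_radius (complex_of_real c \<cdot>\<^sub>m A)"
proof -
  obtain \<mu> where \<mu>: "eigenvalue A \<mu>" "spectral_radius A = cmod \<mu>"
    using spectral_radius_mem_max(1)[OF assms(1,2)] unfolding spectrum_def by auto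
  have "eigenvalue (complex_of_real c \<cdot>\<^sub>m A) (complex_of_real c * \<mu>)"
    by (rule eigenvalue_smult_mat[OF A \<mu>(1)])
  then have "cmod (complex_of_real c * \<mu>) \<le> spectral_radius (complex_of_real c \<cdot>\<^sub>m A)"
    using A \<open>n > 0\<close> by (intro spectral_radius_mem_max(2)[of _ n] imageI) (simp_all add: spectrum_def)
  then show ?thesis using \<mu>(2) \<open>c \<ge> 0\<close> by (simp add: norm_mult)
qed

lemma entrywise_l1_norm_le:
  assumes "A \<in> carrier_mat n n" and "\<And>i j. i < n \<Longrightarrow> j < n \<Longrightarrow> cmod (A $$ (i, j)) \<le> b"
  shows "entrywise_l1_norm A \<le> real n * real n * b"
proof -
  have dims: "dim_row A = n" "dim_col A = n" using assms(1) by auto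
  have "entrywise_l1_norm A \<le> (\<Sum>i = 0..<n. \<Sum>j = 0..<n. b)"
    unfolding entrywise_l1_norm_def dims using assms(2) by (intro sum_mono) auto
  then show ?thesis by (simp add: mult.assoc)
qed

lemma entrywise_l1_norm_pow_bound:
  assumes A: "A \<in> carrier_mat n n" and "n > 0" and t: "spectral_radius A < t"
  shows "\<exists>C. \<forall>k. entrywise_l1_norm (A ^\<^sub>m k) \<le> C * t ^ k"
proof -
  have "t > 0" using t spectral_radius_nonneg[OF A \<open>n > 0\<close>] by simp
  define B where "B = complex_of_real (1 / t) \<cdot>\<^sub>m A"
  have B: "B \<in> carrier_mat n n" using A by (simp add: B_def)
  have AB: "A = complex_of_real t \<cdot>\<^sub>m B"
    using A \<open>t > 0\<close> by (intro eq_matI) (auto simp: B_def)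
  have "t * spectral_radius B \<le> spectral_radius A"
    using spectral_radius_smult_ge[OF B \<open>n > 0\<close>, of t] \<open>t > 0\<close> AB by simp
  then have "t * spectral_radius B < t * 1" using t by linarith
  then have "spectral_radius B < 1" using \<open>t > 0\<close> by (simp only: mult_less_cancel_left_pos)
  from spectral_radius_jnf_norm_bound_less_1_upper_triangular[OF B this]
  obtain c where c: "\<forall>k. norm_bound (B ^\<^sub>m k) c" ..
  have entry: "cmod ((A ^\<^sub>m k) $$ (i, j)) \<le> t ^ k * c" if "i < n" "j < n" for i j k
  proof -
    have "(A ^\<^sub>m k) $$ (i, j) = complex_of_real (t ^ k) * (B ^\<^sub>m k) $$ (i, j)"
      unfolding AB smult_pow_mat[OF B] using that B by simp
    moreover have "cmod ((B ^\<^sub>m k) $$ (i, j)) \<le> c"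
      using c that B unfolding norm_bound_def by simp
    ultimately show ?thesis
      using \<open>t > 0\<close> by (simp add: norm_mult norm_power mult_left_mono)
  qed
  have "entrywise_l1_norm (A ^\<^sub>m k) \<le> real n * real n * (t ^ k * c)" for k
    by (rule entrywise_l1_norm_le[OF _ entry]) (use A in simp)
  then have "entrywise_l1_norm (A ^\<^sub>m k) \<le> (real n * real n * c) * t ^ k" for k
    by (simp add: mult_ac)
  then show ?thesis by blast
qed

section \<open>Exponential growth rates\<close>

lemma limsup_elog2_le:
  assumes "t > 0" and bound: "\<forall>\<^sub>F n in sequentially. a n \<le> C * t ^ n"
  shows "limsup (\<lambda>n. elog2 (a n) / ereal (real n)) \<le> ereal (log 2 t)"
proof -
  define C' where "C' = max C 1"
  have "\<forall>\<^sub>F n in sequentially. elog2 (a n) / ereal (real n) \<le> ereal (log 2 C' / real n + log 2 t)"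
    using bound eventually_gt_at_top[of 0]
  proof eventually_elim
    case (elim n)
    show ?case
    proof (cases "a n > 0")
      case True
      have "C' > 0" by (simp add: C'_def)
      have "C * t ^ n \<le> C' * t ^ n"
        using \<open>t > 0\<close> by (intro mult_right_mono) (simp_all add: C'_def)
      then have "a n \<le> C' * t ^ n" using elim(1) by linarith
      then have "log 2 (a n) \<le> log 2 (C' * t ^ n)"
        using True \<open>C' > 0\<close> \<open>t > 0\<close> by simp
      also have "\<dots> = log 2 C' + real n * log 2 t"
        using \<open>C' > 0\<close> \<open>t > 0\<close> by (simp add: log_mult log_nat_power)
      finally have "log 2 (a n) \<le> log 2 C' + real n * log 2 t" .
      then show ?thesis
        using True elim(2) by (simp add: elog2_def field_simps)
    qed (simp add: elog2_def)
  qed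
  then have "limsup (\<lambda>n. elog2 (a n) / ereal (real n)) \<le> limsup (\<lambda>n. ereal (log 2 C' / real n + log 2 t))"
    by (rule Limsup_mono)
  also have "\<dots> = ereal (log 2 t)"
    using tendsto_add[OF lim_const_over_n[of "log 2 C'"] tendsto_const[of "log 2 t"]]
    by (intro lim_imp_Limsup tendsto_ereal) simp_all
  finally show ?thesis .
qed

lemma limsup_elog2_ge:
  assumes "r > 0" "c > 0" and bound: "\<forall>\<^sub>F n in sequentially. r ^ n \<le> c * a n"
  shows "ereal (log 2 r) \<le> limsup (\<lambda>n. elog2 (a n) / ereal (real n))"
proof -
  have "\<forall>\<^sub>F n in sequentially. ereal (- log 2 c / real n + log 2 r) \<le> elog2 (a n) / ereal (real n)"
    using bound eventually_gt_at_top[of 0]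
  proof eventually_elim
    case (elim n)
    have "0 < c * a n" using elim(1) \<open>r > 0\<close> zero_less_power[of r n] by linarith
    then have "a n > 0" using \<open>c > 0\<close> by (simp add: zero_less_mult_iff)
    have "real n * log 2 r = log 2 (r ^ n)" using \<open>r > 0\<close> by (simp add: log_nat_power)
    also have "\<dots> \<le> log 2 (c * a n)" using elim(1) \<open>r > 0\<close> \<open>0 < c * a n\<close> by simp
    also have "\<dots> = log 2 c + log 2 (a n)" using \<open>a n > 0\<close> \<open>c > 0\<close> by (simp add: log_mult)
    finally have "real n * log 2 r - log 2 c \<le> log 2 (a n)" by simp
    then have "(real n * log 2 r - log 2 c) / real n \<le> log 2 (a n) / real n"
      by (rule divide_right_mono) simp
    moreover have "- log 2 c / real n + log 2 r = (real n * log 2 r - log 2 c) / real n"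
      using elim(2) by (simp add: field_simps)
    ultimately show ?case
      using \<open>a n > 0\<close> elim(2) by (simp add: elog2_def)
  qed
  then have "limsup (\<lambda>n. ereal (- log 2 c / real n + log 2 r)) \<le> limsup (\<lambda>n. elog2 (a n) / ereal (real n))"
    by (rule Limsup_mono)
  moreover have "limsup (\<lambda>n. ereal (- log 2 c / real n + log 2 r)) = ereal (log 2 r)"
    using tendsto_add[OF lim_const_over_n[of "- log 2 c"] tendsto_const[of "log 2 r"]]
    by (intro lim_imp_Limsup tendsto_ereal) simp_all
  ultimately show ?thesis by simp
qed

lemma limsup_elog2_eq_growth_rate:
  assumes "r \<ge> 0" "c > 0"
    and lower: "\<forall>\<^sub>F n in sequentially. r ^ n \<le> c * a n"
    and upper: "\<And>t. r < t \<Longrightarrow> \<exists>C. \<forall>\<^sub>F n in sequentially. a n \<le> C * t ^ n"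
  shows "limsup (\<lambda>n. elog2 (a n) / ereal (real n)) = elog2 r"
proof -
  let ?h = "limsup (\<lambda>n. elog2 (a n) / ereal (real n))"
  have le: "?h \<le> ereal (log 2 t)" if "r < t" for t
    using upper[OF that] limsup_elog2_le[of t] that \<open>r \<ge> 0\<close> by auto
  show ?thesis
  proof (cases "r > 0")
    case True
    have "?h \<le> ereal (log 2 r)"
    proof (rule ereal_le_epsilon2)
      fix \<epsilon> :: real assume "\<epsilon> > 0"
      then have "?h \<le> ereal (log 2 (r * 2 powr \<epsilon>))" using True by (intro le) simp
      then show "?h \<le> ereal (log 2 r) + ereal \<epsilon>" using True by (simp add: log_mult)
    qed
    then show ?thesis
      using limsup_elog2_ge[OF True \<open>c > 0\<close> lower] True by (simp add: elog2_def)
  next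
    case False
    then have "?h = -\<infinity>"
      using le[of "2 powr _"] \<open>r \<ge> 0\<close> by (intro ereal_bot) force
    then show ?thesis using False \<open>r \<ge> 0\<close> by (simp add: elog2_def)
  qed
qed

theorem limsup_elog2_card_walks:
  assumes e: "bij_betw e {0..<N} V" and "V \<noteq> {}"
  shows "limsup (\<lambda>n. elog2 (real (card (walks V R n))) / ereal (real n)) =
    elog2 (spectral_radius (adjacency_mat N e R))"
proof -
  let ?A = "adjacency_mat N e R :: complex mat"
  let ?\<rho> = "spectral_radius ?A"
  have A: "?A \<in> carrier_mat N N" by (simp add: carrier_matI)
  have "N > 0" using e \<open>V \<noteq> {}\<close> by (auto simp: bij_betw_def)
  have card_walks: "real (card (walks V R n)) = entrywise_l1_norm (?A ^\<^sub>m (n - 1))" if "n > 0" for n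
    using entrywise_l1_norm_adjacency_mat_pow[OF e, of R "n - 1"] that by simp
  have \<rho>: "?\<rho> \<ge> 0" by (rule spectral_radius_nonneg[OF A \<open>N > 0\<close>])
  show ?thesis
  proof (rule limsup_elog2_eq_growth_rate[OF \<rho>, of "max 1 ?\<rho>"])
    show "\<forall>\<^sub>F n in sequentially. ?\<rho> ^ n \<le> max 1 ?\<rho> * real (card (walks V R n))"
      using eventually_gt_at_top[of 0]
    proof eventually_elim
      case (elim n)
      have "?\<rho> ^ n = ?\<rho> * ?\<rho> ^ (n - 1)" using elim by (simp flip: power_Suc)
      also have "\<dots> \<le> max 1 ?\<rho> * entrywise_l1_norm (?A ^\<^sub>m (n - 1))"
        using spectral_radius_pow_le_entrywise_l1_norm[OF A \<open>N > 0\<close>] \<rho>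
        by (intro mult_mono) auto
      finally show ?case using card_walks[OF elim] by simp
    qed
  next
    fix t assume t: "?\<rho> < t"
    then obtain C where C: "\<And>k. entrywise_l1_norm (?A ^\<^sub>m k) \<le> C * t ^ k"
      using entrywise_l1_norm_pow_bound[OF A \<open>N > 0\<close>] by blast
    have "t > 0" using t \<rho> by simp
    have "real (card (walks V R n)) \<le> C / t * t ^ n" if "n > 0" for n
      using C[of "n - 1"] card_walks[OF that] that \<open>t > 0\<close>
      by (cases n) (simp_all add: field_simps)
    then show "\<exists>C. \<forall>\<^sub>F n in sequentially. real (card (walks V R n)) \<le> C * t ^ n"
      using eventually_gt_at_top[of 0] by (blast intro: eventually_mono)
  qed simp
qed

section \<open>Trajectories and admissible families\<close>

lemma length_words: "w \<in> words U n \<Longrightarrow> length w = n"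
  by (simp add: words_def)

lemma nth_in_words:
  assumes "w \<in> words U n" "j < n"
  shows "w ! j \<in> U"
proof -
  have "length w = n" "set w \<subseteq> U" using assms(1) by (simp_all add: words_def)
  then show ?thesis using assms(2) by (intro subsetD[OF \<open>set w \<subseteq> U\<close>] nth_mem) simp
qed

lemma take_Suc_eq_imp_nth_eq:
  assumes "take (Suc i) v = take (Suc i) w"
  shows "v ! i = w ! i"
proof -
  have "take (Suc i) v ! i = take (Suc i) w ! i" by (simp only: assms)
  then show ?thesis by simp
qed

lemma take_Suc_eqI:
  "k < length v \<Longrightarrow> k < length w \<Longrightarrow> take k v = take k w \<Longrightarrow> v ! k = w ! k \<Longrightarrow>
    take (Suc k) v = take (Suc k) w"
  by (simp add: take_Suc_conv_app_nth)

definition admissible_transition :: "('x \<Rightarrow> 'u \<Rightarrow> 'x set) \<Rightarrow> 'x set \<Rightarrow> 'u \<Rightarrow> 'u \<Rightarrow> bool" where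
  "admissible_transition F Q a b \<longleftrightarrow> (\<exists>x\<in>Qsub F Q a. F x a \<inter> Qsub F Q b \<noteq> {})"

lemma adm_entry_eq_of_bool: "adm_entry F Q a b = of_bool (admissible_transition F Q a b)"
  by (simp add: adm_entry_def admissible_transition_def)

lemma adm_entry_eq_1_iff: "adm_entry F Q a b = 1 \<longleftrightarrow> admissible_transition F Q a b"
  by (simp add: adm_entry_def admissible_transition_def)

lemma adm_matrix_eq_adjacency_mat:
  "adm_matrix F Q V = adjacency_mat (card V) (SOME e. bij_betw e {0..<card V} V) (admissible_transition F Q)"
  by (simp add: adm_matrix_def adjacency_mat_def adm_entry_eq_of_bool Let_def)

text \<open>A trajectory under the control word w that stays in the regions Q_{w ! j}; the paper's
  sets I^i_w(x) consist of the endpoints of such trajectories started at x.\<close>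

definition trajectory :: "('x \<Rightarrow> 'u \<Rightarrow> 'x set) \<Rightarrow> 'x set \<Rightarrow> 'u list \<Rightarrow> 'x list \<Rightarrow> bool" where
  "trajectory F Q w ys \<longleftrightarrow> length ys = length w \<and>
     (\<forall>j < length w. ys ! j \<in> Qsub F Q (w ! j)) \<and>
     (\<forall>j. Suc j < length w \<longrightarrow> ys ! Suc j \<in> F (ys ! j) (w ! j))"

lemma trajectory_length: "trajectory F Q w ys \<Longrightarrow> length ys = length w"
  by (simp add: trajectory_def)

lemma trajectory_nth_in_Qsub: "trajectory F Q w ys \<Longrightarrow> j < length w \<Longrightarrow> ys ! j \<in> Qsub F Q (w ! j)"
  by (simp add: trajectory_def)

lemma trajectory_nth_Suc: "trajectory F Q w ys \<Longrightarrow> Suc j < length w \<Longrightarrow> ys ! Suc j \<in> F (ys ! j) (w ! j)"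
  by (simp add: trajectory_def)

lemma trajectory_Cons:
  "trajectory F Q (a # w) (y # ys) \<longleftrightarrow>
     y \<in> Qsub F Q a \<and> trajectory F Q w ys \<and> (w \<noteq> [] \<longrightarrow> ys ! 0 \<in> F y a)"
  unfolding trajectory_def by (cases w) (auto simp: All_less_Suc2 nth_Cons split: nat.split)

lemma trajectory_append:
  assumes "trajectory F Q v ys" "trajectory F Q u zs" "v \<noteq> []" "u \<noteq> []"
    and "zs ! 0 \<in> F (last ys) (last v)"
  shows "trajectory F Q (v @ u) (ys @ zs)"
  using assms(1,3,5)
proof (induction v arbitrary: ys)
  case (Cons a v)
  then obtain y ys' where ys: "ys = y # ys'" by (cases ys) (auto simp: trajectory_def)
  show ?case
  proof (cases "v = []")
    case True
    then have "ys' = []" using Cons.prems ys by (simp add: trajectory_def)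
    then show ?thesis using True Cons.prems assms(2,4) ys by (simp add: trajectory_Cons)
  next
    case False
    then have "ys' \<noteq> []" using Cons.prems ys by (auto simp: trajectory_def)
    then have "trajectory F Q (v @ u) (ys' @ zs)"
      using Cons.IH[of ys'] Cons.prems ys False by (simp add: trajectory_Cons)
    then show ?thesis using Cons.prems ys False \<open>ys' \<noteq> []\<close> by (simp add: trajectory_Cons nth_append)
  qed
qed simp

lemma trajectory_successively:
  assumes "trajectory F Q w ys"
  shows "successively (admissible_transition F Q) w"
  unfolding successively_conv_nth
proof (intro allI impI)
  fix i assume "Suc i < length w"
  then have "ys ! i \<in> Qsub F Q (w ! i)" "ys ! Suc i \<in> F (ys ! i) (w ! i) \<inter> Qsub F Q (w ! Suc i)"
    using assms by (simp_all add: trajectory_def)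
  then show "admissible_transition F Q (w ! i) (w ! Suc i)"
    unfolding admissible_transition_def by blast
qed

lemma trajectory_in_Iset:
  assumes "trajectory F Q w ys" "i < length w"
  shows "ys ! i \<in> Iset F Q w (ys ! 0) i"
  using assms(2)
proof (induction i)
  case (Suc i)
  then show ?case using assms(1) by (auto simp: trajectory_def Img_def)
qed simp

lemma Iset_subset_Qsub:
  "x \<in> Qsub F Q (w ! 0) \<Longrightarrow> i < length w \<Longrightarrow> Iset F Q w x i \<subseteq> Qsub F Q (w ! i)"
  by (cases i) auto

lemma Iset_cong:
  "length w = length w' \<Longrightarrow> take (Suc i) w = take (Suc i) w' \<Longrightarrow> Iset F Q w x i = Iset F Q w' x i"
proof (induction i)
  case (Suc i)
  have "take (Suc i) w = take (Suc i) w'"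
    using arg_cong[OF Suc.prems(2), of "take (Suc i)"] by simp
  moreover have "w ! i = w' ! i" "w ! Suc i = w' ! Suc i"
    using take_Suc_eq_imp_nth_eq Suc.prems(2) calculation by blast+
  ultimately show ?case using Suc by simp
qed simp

lemma Iset_imp_trajectory:
  assumes "x \<in> Qsub F Q (w ! 0)" "i < length w" "y \<in> Iset F Q w x i"
  shows "\<exists>ys. trajectory F Q (take (Suc i) w) ys \<and> ys ! 0 = x \<and> last ys = y"
  using assms(2,3)
proof (induction i arbitrary: y)
  case 0
  then show ?case
    using assms(1) by (intro exI[of _ "[x]"]) (auto simp: trajectory_def take_Suc_conv_app_nth)
next
  case (Suc i)
  then obtain y' where y': "y' \<in> Iset F Q w x i" "y \<in> F y' (w ! i)" "y \<in> Qsub F Q (w ! Suc i)"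
    by (auto simp: Img_def)
  with Suc obtain ys where ys: "trajectory F Q (take (Suc i) w) ys" "ys ! 0 = x" "last ys = y'"
    by auto
  have "trajectory F Q (take (Suc i) w @ [w ! Suc i]) (ys @ [y])"
    using ys y' Suc.prems(1)
    by (intro trajectory_append) (auto simp: trajectory_def take_Suc_conv_app_nth)
  moreover have "ys \<noteq> []" using trajectory_length[OF ys(1)] Suc.prems(1) by auto
  ultimately show ?case
    using ys Suc.prems(1) by (intro exI[of _ "ys @ [y]"]) (auto simp: take_Suc_conv_app_nth nth_append)
qed

definition trajectory_words :: "('x \<Rightarrow> 'u \<Rightarrow> 'x set) \<Rightarrow> 'x set \<Rightarrow> 'u set \<Rightarrow> nat \<Rightarrow> 'x \<Rightarrow> 'u list set" where
  "trajectory_words F Q V n x = {w \<in> words V n. \<exists>ys. trajectory F Q w ys \<and> ys ! 0 = x}"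

lemma trajectory_words_start:
  assumes "w \<in> trajectory_words F Q V n x" "0 < n"
  shows "w ! 0 \<in> V" "x \<in> Qsub F Q (w ! 0)"
proof -
  obtain ys where "trajectory F Q w ys" "ys ! 0 = x" "length w = n" "set w \<subseteq> V"
    using assms(1) by (auto simp: trajectory_words_def words_def)
  then show "w ! 0 \<in> V" "x \<in> Qsub F Q (w ! 0)"
    using assms(2) nth_mem[of 0 w] trajectory_nth_in_Qsub[of F Q w ys 0] by auto
qed

lemma adm_point_cover:
  assumes "adm_point F Q n S x" "v \<in> S" "Suc i < n"
  shows "Img F (Iset F Q v x i) (v ! i) \<subseteq>
    (\<Union>v'\<in>{v' \<in> S. take (Suc i) v' = take (Suc i) v}. Qsub F Q (v' ! Suc i))"
  using assms unfolding adm_point_def by auto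

lemma adm_point_first_letter:
  assumes "adm_point F Q n S x" "v \<in> S" "2 \<le> n"
  shows "x \<in> Qsub F Q (v ! 0)"
proof -
  have "F x (v ! 0) \<subseteq> Q"
    using adm_point_cover[OF assms(1,2), of 0] assms(3) by (auto simp: Img_def Qsub_def)
  then show ?thesis using assms(1) by (simp add: adm_point_def Qsub_def)
qed

lemma adm_point_successor:
  assumes "adm_point F Q n S x" "S \<subseteq> words U n" "v \<in> S" "Suc i < n"
    and "y \<in> Iset F Q v x i" "z \<in> F y (v ! i)"
  shows "\<exists>v'\<in>S. take (Suc i) v' = take (Suc i) v \<and> z \<in> Qsub F Q (v' ! Suc i) \<and>
    z \<in> Iset F Q v' x (Suc i)"
proof -
  have z: "z \<in> Img F (Iset F Q v x i) (v ! i)" using assms(5,6) by (auto simp: Img_def)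
  then obtain v' where v': "v' \<in> S" "take (Suc i) v' = take (Suc i) v" "z \<in> Qsub F Q (v' ! Suc i)"
    using adm_point_cover[OF assms(1,3,4)] by auto
  have "length v' = n" "length v = n" using v'(1) assms(2,3) length_words by blast+
  then have "Iset F Q v' x i = Iset F Q v x i" using v'(2) by (intro Iset_cong) simp_all
  moreover have "v' ! i = v ! i" using take_Suc_eq_imp_nth_eq[OF v'(2)] .
  ultimately have "z \<in> Iset F Q v' x (Suc i)"
    using z v'(3) \<open>length v' = n\<close> assms(4) by simp
  then show ?thesis using v' by blast
qed

section \<open>Systems with a partitioning cover\<close>

locale partitioning_cover =
  fixes X :: "'x set" and U :: "'u set" and F :: "'x \<Rightarrow> 'u \<Rightarrow> 'x set"
    and Q :: "'x set" and V :: "'u set"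
  assumes sys: "is_system X U F"
    and inv: "controlled_invariant X U F Q"
    and VU: "V \<subseteq> U" and finV: "finite V" and Vne: "V \<noteq> {}"
    and cov: "cover F Q V"
    and C1: "\<forall>a\<in>V. \<forall>b\<in>V. a \<noteq> b \<longrightarrow> Qsub F Q a \<inter> Qsub F Q b = {}"
    and C2: "\<forall>a\<in>V. \<forall>b\<in>V. adm_entry F Q a b = 1 \<longrightarrow>
               (\<exists>K. K \<subseteq> Qsub F Q a \<and> Qsub F Q b \<subseteq> Img F K a)"
    and C3: "\<forall>c\<in>U - V. Qsub F Q c = {}"
begin

lemma Qsub_unique:
  "a \<in> U \<Longrightarrow> b \<in> U \<Longrightarrow> y \<in> Qsub F Q a \<Longrightarrow> y \<in> Qsub F Q b \<Longrightarrow> a = b"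
  using C1 C3 by blast

lemma trajectory_exists:
  assumes "y \<in> Q"
  shows "\<exists>w ys. w \<in> words V (Suc m) \<and> trajectory F Q w ys \<and> ys ! 0 = y"
  using assms
proof (induction m arbitrary: y)
  case 0
  then obtain a where "a \<in> V" "y \<in> Qsub F Q a" using cov by (auto simp: cover_def)
  then show ?case by (intro exI[of _ "[a]"] exI[of _ "[y]"]) (auto simp: words_def trajectory_def)
next
  case (Suc m)
  obtain a where a: "a \<in> V" "y \<in> Qsub F Q a" using Suc.prems cov by (auto simp: cover_def)
  moreover have "F y a \<noteq> {}"
    using sys inv a(1) VU Suc.prems unfolding is_system_def controlled_invariant_def by blast
  then obtain z where z: "z \<in> F y a" by blast
  moreover from a z have "z \<in> Q" by (auto simp: Qsub_def)
  then obtain w ys where "w \<in> words V (Suc m)" "trajectory F Q w ys" "ys ! 0 = z"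
    using Suc.IH by blast
  ultimately show ?case
    by (intro exI[of _ "a # w"] exI[of _ "y # ys"]) (auto simp: words_def trajectory_Cons)
qed

lemma walk_has_trajectory:
  "w \<noteq> [] \<Longrightarrow> set w \<subseteq> V \<Longrightarrow> successively (admissible_transition F Q) w \<Longrightarrow>
    Qsub F Q (last w) \<noteq> {} \<Longrightarrow> \<exists>ys. trajectory F Q w ys"
proof (induction w)
  case (Cons a w)
  show ?case
  proof (cases "w = []")
    case True
    obtain y where "y \<in> Qsub F Q a" using Cons.prems True by auto
    then show ?thesis using True by (intro exI[of _ "[y]"]) (simp add: trajectory_def)
  next
    case False
    then obtain ys where ys: "trajectory F Q w ys"
      using Cons by (auto simp: successively_Cons)
    have "w ! 0 \<in> set w" using False by (simp add: nth_mem)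
    then have "w ! 0 \<in> V" using Cons.prems(2) by auto
    moreover have "admissible_transition F Q a (w ! 0)" "a \<in> V"
      using Cons.prems False by (auto simp: successively_Cons hd_conv_nth)
    ultimately obtain K where K: "K \<subseteq> Qsub F Q a" "Qsub F Q (w ! 0) \<subseteq> Img F K a"
      using C2 unfolding adm_entry_eq_1_iff by blast
    have "ys ! 0 \<in> Qsub F Q (w ! 0)" using trajectory_nth_in_Qsub[OF ys, of 0] False by simp
    then obtain y where "y \<in> K" "ys ! 0 \<in> F y a" using K by (auto simp: Img_def)
    then have "trajectory F Q (a # w) (y # ys)" using ys K by (auto simp: trajectory_Cons)
    then show ?thesis by blast
  qed
qed simp

lemma adm_point_traces_trajectory:
  assumes S: "adm_point F Q n S x" "S \<subseteq> words U n" "S \<noteq> {}" and "2 \<le> n"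
    and w: "trajectory F Q w ys" "w \<in> words U n" "ys ! 0 = x" and "i < n"
  shows "\<exists>w'\<in>S. take (Suc i) w' = take (Suc i) w \<and> ys ! i \<in> Iset F Q w' x i"
proof -
  have "length w = n" by (rule length_words[OF w(2)])
  show ?thesis
    using \<open>i < n\<close>
  proof (induction i)
    case 0
    obtain v where v: "v \<in> S" using S(3) by blast
    then have "v \<in> words U n" using S(2) by blast
    have "x \<in> Qsub F Q (v ! 0)" by (rule adm_point_first_letter[OF S(1) v \<open>2 \<le> n\<close>])
    moreover have "x \<in> Qsub F Q (w ! 0)"
      using trajectory_nth_in_Qsub[OF w(1), of 0] w(3) \<open>length w = n\<close> \<open>2 \<le> n\<close> by simp
    moreover have "v ! 0 \<in> U" "w ! 0 \<in> U"
      using nth_in_words[OF \<open>v \<in> words U n\<close>, of 0] nth_in_words[OF w(2), of 0] \<open>2 \<le> n\<close>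
      by simp_all
    ultimately have "v ! 0 = w ! 0" using Qsub_unique by blast
    then show ?case
      using v length_words[OF \<open>v \<in> words U n\<close>] w(3) \<open>length w = n\<close> \<open>2 \<le> n\<close>
      by (intro bexI[OF _ v]) (simp add: take_Suc_conv_app_nth)
  next
    case (Suc i)
    then obtain v where v: "v \<in> S" "take (Suc i) v = take (Suc i) w" "ys ! i \<in> Iset F Q v x i"
      by auto
    have "ys ! Suc i \<in> F (ys ! i) (v ! i)"
      using trajectory_nth_Suc[OF w(1)] \<open>length w = n\<close> Suc.prems take_Suc_eq_imp_nth_eq[OF v(2)] by simp
    then obtain v' where v': "v' \<in> S" "take (Suc i) v' = take (Suc i) v"
      "ys ! Suc i \<in> Qsub F Q (v' ! Suc i)" "ys ! Suc i \<in> Iset F Q v' x (Suc i)"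
      using adm_point_successor[OF S(1) S(2) v(1) Suc.prems v(3)] by blast
    have "v' \<in> words U n" using v'(1) S(2) by blast
    have "ys ! Suc i \<in> Qsub F Q (w ! Suc i)"
      using trajectory_nth_in_Qsub[OF w(1)] \<open>length w = n\<close> Suc.prems by simp
    moreover have "v' ! Suc i \<in> U" "w ! Suc i \<in> U"
      using nth_in_words[OF \<open>v' \<in> words U n\<close> Suc.prems] nth_in_words[OF w(2) Suc.prems]
      by simp_all
    ultimately have "v' ! Suc i = w ! Suc i" using Qsub_unique v'(3) by blast
    then have "take (Suc (Suc i)) v' = take (Suc (Suc i)) w"
      using v(2) v'(2) length_words[OF \<open>v' \<in> words U n\<close>] \<open>length w = n\<close> Suc.prems
      by (intro take_Suc_eqI[of "Suc i"]) simp_all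
    then show ?case using v'(1,4) by blast
  qed
qed

lemma walks_subset_spanning:
  assumes "2 \<le> n" and L: "spanning U F Q n L"
  shows "walks V (admissible_transition F Q) n \<subseteq> L"
proof
  fix w assume w: "w \<in> walks V (admissible_transition F Q) n"
  then have "w \<noteq> []" "set w \<subseteq> V" "length w = n"
    and walk: "successively (admissible_transition F Q) w"
    using \<open>2 \<le> n\<close> by (auto simp: walks_def)
  obtain m where m: "n = Suc (Suc m)" using le_Suc_ex[OF \<open>2 \<le> n\<close>] by auto
  have "admissible_transition F Q (w ! m) (w ! Suc m)"
    using successively_nth[OF walk] \<open>length w = n\<close> m by simp
  moreover have "last w = w ! Suc m"
    using \<open>length w = n\<close> m \<open>w \<noteq> []\<close> by (simp add: last_conv_nth)
  ultimately have "Qsub F Q (last w) \<noteq> {}" by (auto simp: admissible_transition_def)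
  then obtain ys where ys: "trajectory F Q w ys"
    using walk_has_trajectory \<open>w \<noteq> []\<close> \<open>set w \<subseteq> V\<close> walk by blast
  have "ys ! 0 \<in> Q" using trajectory_nth_in_Qsub[OF ys, of 0] \<open>w \<noteq> []\<close> by (simp add: Qsub_def)
  then obtain S where S: "S \<subseteq> L" "admissible_family U F Q n S" "adm_point F Q n S (ys ! 0)"
    using L unfolding spanning_def QS_def by blast
  have "w \<in> words U n" using \<open>set w \<subseteq> V\<close> \<open>length w = n\<close> VU by (auto simp: words_def)
  moreover have "S \<subseteq> words U n" "S \<noteq> {}" using S(2) unfolding admissible_family_def by auto
  ultimately obtain w' where "w' \<in> S" "take (Suc (n - 1)) w' = take (Suc (n - 1)) w"
    using adm_point_traces_trajectory[OF S(3) _ _ \<open>2 \<le> n\<close> ys _ refl, where i = "n - 1"] \<open>2 \<le> n\<close>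
    by auto
  moreover have "w' = w"
    using calculation S(2) \<open>length w = n\<close> \<open>2 \<le> n\<close>
    by (auto simp: admissible_family_def words_def)
  ultimately show "w \<in> L" using S(1) by blast
qed

lemma trajectory_words_extend:
  assumes w: "w \<in> trajectory_words F Q V n x" and "Suc (Suc i) \<le> n"
    and z: "z \<in> Img F (Iset F Q w x i) (w ! i)"
  shows "\<exists>w'\<in>trajectory_words F Q V n x. take (Suc i) w' = take (Suc i) w \<and> z \<in> Qsub F Q (w' ! Suc i)"
proof -
  obtain ys where ys: "trajectory F Q w ys" "ys ! 0 = x" and "length w = n" "set w \<subseteq> V"
    using w by (auto simp: trajectory_words_def words_def)
  have x: "x \<in> Qsub F Q (w ! 0)" using trajectory_words_start(2)[OF w] \<open>Suc (Suc i) \<le> n\<close> by simp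
  obtain y where y: "y \<in> Iset F Q w x i" "z \<in> F y (w ! i)" using z by (auto simp: Img_def)
  obtain ys' where ys': "trajectory F Q (take (Suc i) w) ys'" "ys' ! 0 = x" "last ys' = y"
    using Iset_imp_trajectory[OF x _ y(1)] \<open>length w = n\<close> \<open>Suc (Suc i) \<le> n\<close> by auto
  have "y \<in> Qsub F Q (w ! i)"
    using Iset_subset_Qsub[OF x, of i] y(1) \<open>length w = n\<close> \<open>Suc (Suc i) \<le> n\<close> by auto
  then have "z \<in> Q" using y(2) by (auto simp: Qsub_def)
  then obtain u zs where u: "u \<in> words V (Suc (n - Suc (Suc i)))" "trajectory F Q u zs" "zs ! 0 = z"
    using trajectory_exists by blast
  define w' where "w' = take (Suc i) w @ u"
  have "u \<noteq> []" using u(1) by (auto simp: words_def)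
  have "last (take (Suc i) w) = w ! i"
    using \<open>length w = n\<close> \<open>Suc (Suc i) \<le> n\<close> by (simp add: take_Suc_conv_app_nth)
  then have "trajectory F Q w' (ys' @ zs)"
    unfolding w'_def using ys' u y(2) \<open>u \<noteq> []\<close> \<open>length w = n\<close> \<open>Suc (Suc i) \<le> n\<close>
    by (intro trajectory_append) auto
  moreover have "ys' \<noteq> []"
    using trajectory_length[OF ys'(1)] \<open>length w = n\<close> \<open>Suc (Suc i) \<le> n\<close> by auto
  moreover have "w' \<in> words V n"
    using u(1) \<open>set w \<subseteq> V\<close> \<open>length w = n\<close> \<open>Suc (Suc i) \<le> n\<close>
    by (auto simp: w'_def words_def dest: in_set_takeD)
  moreover have "w' ! Suc i = u ! 0" "take (Suc i) w' = take (Suc i) w"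
    using \<open>length w = n\<close> \<open>Suc (Suc i) \<le> n\<close> by (auto simp: w'_def nth_append)
  moreover have "z \<in> Qsub F Q (u ! 0)" using trajectory_nth_in_Qsub[OF u(2), of 0] u(3) \<open>u \<noteq> []\<close> by simp
  ultimately show ?thesis
    using ys' by (intro bexI[of _ w']) (auto simp: trajectory_words_def nth_append)
qed

lemma adm_point_trajectory_words:
  assumes "x \<in> Q" "2 \<le> n"
  shows "adm_point F Q n (trajectory_words F Q V n x) x"
  unfolding adm_point_def
proof (intro conjI ballI allI impI)
  fix w assume w: "w \<in> trajectory_words F Q V n x"
  then obtain ys where ys: "trajectory F Q w ys" "ys ! 0 = x" and "length w = n"
    by (auto simp: trajectory_words_def words_def)
  have x: "x \<in> Qsub F Q (w ! 0)" using trajectory_words_start(2)[OF w] \<open>2 \<le> n\<close> by simp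
  show "Iset F Q w x n \<subseteq> Q"
  proof -
    obtain m where "n = Suc m" using \<open>2 \<le> n\<close> by (cases n) auto
    then have "Iset F Q w x n = Img F (Iset F Q w x m) (w ! m)" using \<open>length w = n\<close> by simp
    then show ?thesis
      using Iset_subset_Qsub[OF x, of m] \<open>length w = n\<close> \<open>n = Suc m\<close> by (auto simp: Img_def Qsub_def)
  qed
  fix i assume "i + 2 \<le> n"
  then show "Iset F Q w x (Suc i) \<noteq> {}"
    using trajectory_in_Iset[OF ys(1), of "Suc i"] ys(2) \<open>length w = n\<close> by auto
  show "Img F (Iset F Q w x i) (w ! i) \<subseteq>
      (\<Union>w'\<in>{w' \<in> trajectory_words F Q V n x. take (Suc i) w' = take (Suc i) w}. Qsub F Q (w' ! Suc i))"
  proof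
    fix z assume "z \<in> Img F (Iset F Q w x i) (w ! i)"
    then obtain w' where "w' \<in> trajectory_words F Q V n x" "take (Suc i) w' = take (Suc i) w"
      "z \<in> Qsub F Q (w' ! Suc i)"
      using trajectory_words_extend[OF w] \<open>i + 2 \<le> n\<close> by auto
    then show "z \<in> (\<Union>w'\<in>{w' \<in> trajectory_words F Q V n x. take (Suc i) w' = take (Suc i) w}.
        Qsub F Q (w' ! Suc i))" by blast
  qed
qed (fact \<open>x \<in> Q\<close>)

lemma walks_spanning:
  assumes "2 \<le> n"
  shows "spanning U F Q n (walks V (admissible_transition F Q) n)"
  unfolding spanning_def
proof (intro conjI subsetI)
  show "w \<in> words U n" if "w \<in> walks V (admissible_transition F Q) n" for w
    using that VU by (auto simp: walks_def words_def)
  fix x assume "x \<in> Q"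
  let ?S = "trajectory_words F Q V n x"
  have "?S \<subseteq> walks V (admissible_transition F Q) n"
    by (auto simp: trajectory_words_def words_def walks_def dest: trajectory_successively)
  moreover have "?S \<noteq> {}"
    using trajectory_exists[OF \<open>x \<in> Q\<close>, of "n - 1"] \<open>2 \<le> n\<close> by (auto simp: trajectory_words_def)
  moreover have "?S \<subseteq> words U n" using VU by (auto simp: trajectory_words_def words_def)
  moreover have "w ! 0 = w' ! 0" if "w \<in> ?S" "w' \<in> ?S" for w w'
  proof (rule Qsub_unique)
    show "w ! 0 \<in> U" "w' ! 0 \<in> U" "x \<in> Qsub F Q (w ! 0)" "x \<in> Qsub F Q (w' ! 0)"
      using trajectory_words_start[OF that(1)] trajectory_words_start[OF that(2)] VU \<open>2 \<le> n\<close> by auto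
  qed
  moreover have "adm_point F Q n ?S x" by (rule adm_point_trajectory_words[OF \<open>x \<in> Q\<close> \<open>2 \<le> n\<close>])
  ultimately have "admissible_family U F Q n ?S" "x \<in> QS F Q n ?S"
    unfolding admissible_family_def QS_def by blast+
  then show "x \<in> (\<Union>S\<in>{S. S \<subseteq> walks V (admissible_transition F Q) n \<and> admissible_family U F Q n S}. QS F Q n S)"
    using \<open>?S \<subseteq> walks V (admissible_transition F Q) n\<close> by blast
qed

lemma r_inv_eq_card_walks:
  assumes "2 \<le> n"
  shows "r_inv U F Q n = enat (card (walks V (admissible_transition F Q) n))"
proof -
  let ?W = "walks V (admissible_transition F Q) n"
  have "enat (card ?W) \<in> (\<lambda>L. if finite L then enat (card L) else \<infinity>) ` {L. spanning U F Q n L}"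
    using walks_spanning[OF assms] finite_walks[OF finV] by (intro image_eqI[where x = ?W]) simp_all
  then have "r_inv U F Q n \<le> enat (card ?W)" unfolding r_inv_def by (rule Inf_lower)
  moreover have "enat (card ?W) \<le> r_inv U F Q n"
    unfolding r_inv_def
  proof (rule Inf_greatest)
    fix k assume "k \<in> (\<lambda>L. if finite L then enat (card L) else \<infinity>) ` {L. spanning U F Q n L}"
    then obtain L where "spanning U F Q n L" "k = (if finite L then enat (card L) else \<infinity>)" by auto
    then show "enat (card ?W) \<le> k"
      using walks_subset_spanning[OF assms] by (auto intro: card_mono)
  qed
  ultimately show ?thesis by simp
qed

lemma h_inv_eq_limsup_card_walks:
  "h_inv U F Q =
    limsup (\<lambda>n. elog2 (real (card (walks V (admissible_transition F Q) n))) / ereal (real n))"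
proof -
  have "\<forall>\<^sub>F n in sequentially. elog2_enat (r_inv U F Q n) / ereal (real n) =
      elog2 (real (card (walks V (admissible_transition F Q) n))) / ereal (real n)"
    using eventually_ge_at_top[of 2]
    by eventually_elim (simp add: r_inv_eq_card_walks elog2_enat_def)
  then show ?thesis unfolding h_inv_def by (rule Limsup_eq)
qed

end

theorem theorem3p10:
  fixes X :: "'x set" and U :: "'u set" and F :: "'x \<Rightarrow> 'u \<Rightarrow> 'x set"
    and Q :: "'x set" and V :: "'u set"
  assumes sys: "is_system X U F"
    and inv: "controlled_invariant X U F Q"
    and VU: "V \<subseteq> U" and finV: "finite V" and Vne: "V \<noteq> {}"
    and cov: "cover F Q V"
    and C1: "\<forall>a\<in>V. \<forall>b\<in>V. a \<noteq> b \<longrightarrow> Qsub F Q a \<inter> Qsub F Q b = {}"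
    and C2: "\<forall>a\<in>V. \<forall>b\<in>V. adm_entry F Q a b = 1 \<longrightarrow>
               (\<exists>K. K \<subseteq> Qsub F Q a \<and> Qsub F Q b \<subseteq> Img F K a)"
    and C3: "\<forall>c\<in>U - V. Qsub F Q c = {}"
  shows "h_inv U F Q = elog2 (spectral_radius (adm_matrix F Q V))"
proof -
  interpret partitioning_cover X U F Q V
    using assms by unfold_locales
  have e: "bij_betw (SOME e. bij_betw e {0..<card V} V) {0..<card V} V"
    using someI_ex[OF ex_bij_betw_nat_finite[OF finV]] .
  show ?thesis
    unfolding h_inv_eq_limsup_card_walks adm_matrix_eq_adjacency_mat
    by (rule limsup_elog2_card_walks[OF e Vne])
qed

end
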